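(* Consider a stochastic non-zero-sum game $(\mathcal{P}^D)$ with a partially nested information structure and its policy-dependent static reduction $(\mathcal{P}^S)$. Then: (i) If a policy $\underline{\gamma}^{D,*}$ is a PL-NE (DM-NE, stationary) for $(\mathcal{P}^D)$, then the policy $\underline{\gamma}^{S,*}$ obtained from it via the policy-dependent static reduction relation is not necessarily a PL-NE (DM-NE, stationary) for $(\mathcal{P}^S)$. (ii) If a policy $\underline{\gamma}^{S,*}$ is a PL-NE (DM-NE, stationary) for $(\mathcal{P}^S)$, then a policy $\underline{\gamma}^{D,*}$ related to it through the policy-dependent static reduction relation is not necessarily a PL-NE (DM-NE, stationary) for $(\mathcal{P}^D)$. (iii) The statement of part (i) remains valid even if, for every fixed $u^D_{\downarrow(i,k)}$, the map $h_{i,k}(\zeta)\mapsto g_{i,k}(h_{i,k}(\zeta),u^D_{\downarrow(i,k)})$ is invertible for all realizations of $\zeta$ (for all $i,k$), each cost $c^i$ is continuously differentiable and jointly convex in all players' actions for every $\omega_0$, and $\underline{\gamma}^{D,*}$ satisfies Condition (C): for all $i\in\mathcal{N}$, $k\in\mathrm{TE}^i$, the composed map $\gamma^D_{i,k}\big(\{g_{j,l}(h_{j,l}(\zeta),u^{\downarrow(j,l)})\}_{(j,l)\in\downarrow(i,k)},\,g_{i,k}(h_{i,k}(\zeta),u^{\downarrow(i,k)})\big)$ is affine in $u^{\downarrow(i,k)}$.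
   Context: Setting: $N$ players, player $i$ consisting of one-shot decision makers DM$^k$, $k\in\mathrm{TE}^i$, acting sequentially; $\zeta=\{\omega_0,\omega_1,\dots,\omega_N\}$ collects all primitive random variables. In $(\mathcal{P}^D)$ (partially nested information structure), DM$^k$ of PL$^i$ observes $y^D_{i,k}=[\,y^D_{\downarrow(i,k)},\ \hat y^D_{i,k}=g_{i,k}(h_{i,k}(\zeta),u^D_{\downarrow(i,k)})\,]$, where $\downarrow(i,k)$ is the set of DMs $(j,l)$ whose actions affect $\hat y^D_{i,k}$ and $y^D_{\downarrow(i,k)}$ are their observations; $g_{i,k},h_{i,k}$ measurable. Costs $J^i(\underline{\gamma}^D)=E[c^i(\omega_0,\gamma^D_1(y^D_1),\dots,\gamma^D_N(y^D_N))]$ with Borel $c^i$. In the policy-dependent static reduction $(\mathcal{P}^S)$ (defined when the invertibility above holds), DMs observe $y^S_{i,k}=[\,y^S_{\downarrow(i,k)},\ \hat y^S_{i,k}=h_{i,k}(\zeta)\,]$ with the same costs, and policies are related by $\gamma^S_{i,k}(y^S_{i,k})=\gamma^D_{i,k}\big(y^D_{\downarrow(i,k)},g_{i,k}(h_{i,k}(\zeta),\gamma^D_{\downarrow(i,k)}(y^D_{\downarrow(i,k)}))\big)$ $P$-a.s. for all $i,k$. Only deterministic (pure) policies are considered. PL-NE: no player can lower its expected cost by unilaterally changing its whole policy; DM-NE: no single DM of a player can lower that player's cost by unilaterally changing its own policy; stationary: for each DM the gradient of the conditional expected cost of its player, given its observation, with respect to its action vanishes at the equilibrium action a.s. *)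

theory Defs
  imports "HOL-Analysis.Analysis" "HOL-Probability.Probability"
begin

text \<open>
  Decision makers (DMs) are indexed by 0..<nDM (acting sequentially in this order);
  pl d is the player a DM belongs to (TE^i = {d<nDM. pl d = i}); dn d is the set
  of DMs whose actions affect the observation component yhat_d.  Actions and
  observation components are real; the primitive random vector zeta is a function
  nat => real with omega_0 = zeta 0, distributed according to a finitely supported
  probability mass function.  An observation of DM d is encoded as a function
  nat => real giving the component yhat_e for every e in the set of DMs whose
  information DM d has (d itself and, recursively, the DMs in dn d), 0 elsewhere.
\<close>

record game =
  nDM  :: nat
  nPL  :: nat
  pl   :: "nat \<Rightarrow> nat"
  dn   :: "nat \<Rightarrow> nat set"
  hh   :: "nat \<Rightarrow> (nat \<Rightarrow> real) \<Rightarrow> real"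
  gg   :: "nat \<Rightarrow> real \<Rightarrow> (nat \<Rightarrow> real) \<Rightarrow> real"
  cc   :: "nat \<Rightarrow> real \<Rightarrow> (nat \<Rightarrow> real) \<Rightarrow> real"
  dist :: "(nat \<Rightarrow> real) pmf"

type_synonym policy = "nat \<Rightarrow> (nat \<Rightarrow> real) \<Rightarrow> real"

definition oset :: "game \<Rightarrow> nat \<Rightarrow> nat set" where
  "oset G d = insert d {e. (e, d) \<in> {(a, b). a \<in> dn G b}\<^sup>+}"

definition well_formed :: "game \<Rightarrow> bool" where
  "well_formed G \<longleftrightarrow>
     finite (set_pmf (dist G)) \<and>
     2 \<le> nPL G \<and>
     (\<forall>d<nDM G. pl G d < nPL G) \<and>
     (\<forall>i<nPL G. \<exists>d<nDM G. pl G d = i) \<and>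
     (\<forall>d<nDM G. dn G d \<subseteq> {..<d}) \<and>
     (\<forall>d<nDM G. \<forall>x u u'. (\<forall>e\<in>dn G d. u e = u' e) \<longrightarrow> gg G d x u = gg G d x u') \<and>
     (\<forall>d<nDM G. \<forall>e\<in>dn G d. \<exists>x u a. gg G d x u \<noteq> gg G d x (u(e := a))) \<and>
     (\<forall>d<nDM G. hh G d \<in> borel_measurable borel) \<and>
     (\<forall>d<nDM G. (\<lambda>p. gg G d (fst p) (snd p)) \<in> borel_measurable borel) \<and>
     (\<forall>i<nPL G. (\<lambda>p. cc G i (fst p) (snd p)) \<in> borel_measurable borel)"

definition invertible_as :: "game \<Rightarrow> bool" where
  "invertible_as G \<longleftrightarrow>
     (\<forall>d<nDM G. \<forall>u. inj_on (\<lambda>x. gg G d x u) (hh G d ` set_pmf (dist G)))"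

definition invertible_all :: "game \<Rightarrow> bool" where
  "invertible_all G \<longleftrightarrow>
     (\<forall>d<nDM G. \<forall>u. inj_on (\<lambda>x. gg G d x u) (range (hh G d)))"

definition yhatD :: "game \<Rightarrow> (nat \<Rightarrow> real) \<Rightarrow> (nat \<Rightarrow> real) \<Rightarrow> nat \<Rightarrow> real" where
  "yhatD G \<zeta> u e = gg G e (hh G e \<zeta>) (\<lambda>e'. if e' \<in> dn G e then u e' else 0)"

definition obsD_of :: "game \<Rightarrow> (nat \<Rightarrow> real) \<Rightarrow> (nat \<Rightarrow> real) \<Rightarrow> nat \<Rightarrow> (nat \<Rightarrow> real)" where
  "obsD_of G \<zeta> u d = (\<lambda>e. if e \<in> oset G d then yhatD G \<zeta> u e else 0)"

primrec actsD :: "game \<Rightarrow> policy \<Rightarrow> (nat \<Rightarrow> real) \<Rightarrow> nat \<Rightarrow> (nat \<Rightarrow> real)" where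
  "actsD G \<gamma> \<zeta> 0 = (\<lambda>_. 0)"
| "actsD G \<gamma> \<zeta> (Suc m) =
     (actsD G \<gamma> \<zeta> m)(m := \<gamma> m (obsD_of G \<zeta> (actsD G \<gamma> \<zeta> m) m))"

definition actD :: "game \<Rightarrow> policy \<Rightarrow> (nat \<Rightarrow> real) \<Rightarrow> (nat \<Rightarrow> real)" where
  "actD G \<gamma> \<zeta> = actsD G \<gamma> \<zeta> (nDM G)"

definition obsD :: "game \<Rightarrow> policy \<Rightarrow> (nat \<Rightarrow> real) \<Rightarrow> nat \<Rightarrow> (nat \<Rightarrow> real)" where
  "obsD G \<gamma> \<zeta> d = obsD_of G \<zeta> (actD G \<gamma> \<zeta>) d"

definition obsS :: "game \<Rightarrow> policy \<Rightarrow> (nat \<Rightarrow> real) \<Rightarrow> nat \<Rightarrow> (nat \<Rightarrow> real)" where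
  "obsS G \<gamma> \<zeta> d = (\<lambda>e. if e \<in> oset G d then hh G e \<zeta> else 0)"

definition actS :: "game \<Rightarrow> policy \<Rightarrow> (nat \<Rightarrow> real) \<Rightarrow> (nat \<Rightarrow> real)" where
  "actS G \<gamma> \<zeta> = (\<lambda>d. if d < nDM G then \<gamma> d (obsS G \<gamma> \<zeta> d) else 0)"

definition related :: "game \<Rightarrow> policy \<Rightarrow> policy \<Rightarrow> bool" where
  "related G \<gamma>D \<gamma>S \<longleftrightarrow>
     (\<forall>d<nDM G. \<forall>\<zeta>\<in>set_pmf (dist G). \<gamma>S d (obsS G \<gamma>S \<zeta> d) = \<gamma>D d (obsD G \<gamma>D \<zeta> d))"

definition admissible :: "policy \<Rightarrow> bool" where
  "admissible \<gamma> \<longleftrightarrow> (\<forall>d. \<gamma> d \<in> borel_measurable borel)"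

definition cost :: "game \<Rightarrow> (policy \<Rightarrow> (nat \<Rightarrow> real) \<Rightarrow> (nat \<Rightarrow> real)) \<Rightarrow> policy \<Rightarrow> nat \<Rightarrow> real" where
  "cost G A \<gamma> i = measure_pmf.expectation (dist G) (\<lambda>\<zeta>. cc G i (\<zeta> 0) (A \<gamma> \<zeta>))"

definition PL_NE :: "game \<Rightarrow> (policy \<Rightarrow> (nat \<Rightarrow> real) \<Rightarrow> (nat \<Rightarrow> real)) \<Rightarrow> policy \<Rightarrow> bool" where
  "PL_NE G A \<gamma> \<longleftrightarrow> admissible \<gamma> \<and>
     (\<forall>i<nPL G. \<forall>\<gamma>'. admissible \<gamma>' \<and> (\<forall>d<nDM G. pl G d \<noteq> i \<longrightarrow> \<gamma>' d = \<gamma> d)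
        \<longrightarrow> cost G A \<gamma> i \<le> cost G A \<gamma>' i)"

definition DM_NE :: "game \<Rightarrow> (policy \<Rightarrow> (nat \<Rightarrow> real) \<Rightarrow> (nat \<Rightarrow> real)) \<Rightarrow> policy \<Rightarrow> bool" where
  "DM_NE G A \<gamma> \<longleftrightarrow> admissible \<gamma> \<and>
     (\<forall>d<nDM G. \<forall>\<beta>. \<beta> \<in> borel_measurable borel
        \<longrightarrow> cost G A \<gamma> (pl G d) \<le> cost G A (\<gamma>(d := \<beta>)) (pl G d))"

definition condcost ::
  "game \<Rightarrow> (policy \<Rightarrow> (nat \<Rightarrow> real) \<Rightarrow> (nat \<Rightarrow> real)) \<Rightarrow> (policy \<Rightarrow> (nat \<Rightarrow> real) \<Rightarrow> nat \<Rightarrow> (nat \<Rightarrow> real))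
    \<Rightarrow> policy \<Rightarrow> nat \<Rightarrow> (nat \<Rightarrow> real) \<Rightarrow> real \<Rightarrow> real" where
  "condcost G A Obs \<gamma> d y a =
     (\<Sum>\<zeta>\<in>{\<zeta>\<in>set_pmf (dist G). Obs \<gamma> \<zeta> d = y}.
         pmf (dist G) \<zeta> * cc G (pl G d) (\<zeta> 0) (A (\<gamma>(d := (\<lambda>_. a))) \<zeta>))
     / (\<Sum>\<zeta>\<in>{\<zeta>\<in>set_pmf (dist G). Obs \<gamma> \<zeta> d = y}. pmf (dist G) \<zeta>)"

definition stationary ::
  "game \<Rightarrow> (policy \<Rightarrow> (nat \<Rightarrow> real) \<Rightarrow> (nat \<Rightarrow> real)) \<Rightarrow> (policy \<Rightarrow> (nat \<Rightarrow> real) \<Rightarrow> nat \<Rightarrow> (nat \<Rightarrow> real))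
    \<Rightarrow> policy \<Rightarrow> bool" where
  "stationary G A Obs \<gamma> \<longleftrightarrow> admissible \<gamma> \<and>
     (\<forall>d<nDM G. \<forall>\<zeta>\<in>set_pmf (dist G).
        ((\<lambda>a. condcost G A Obs \<gamma> d (Obs \<gamma> \<zeta> d) a) has_real_derivative 0) (at (\<gamma> d (Obs \<gamma> \<zeta> d))))"

abbreviation "PL_NE_D G \<equiv> PL_NE G (actD G)"
abbreviation "PL_NE_S G \<equiv> PL_NE G (actS G)"
abbreviation "DM_NE_D G \<equiv> DM_NE G (actD G)"
abbreviation "DM_NE_S G \<equiv> DM_NE G (actS G)"
abbreviation "stationary_D G \<equiv> stationary G (actD G) (obsD G)"
abbreviation "stationary_S G \<equiv> stationary G (actS G) (obsS G)"

definition smooth_convex_costs :: "game \<Rightarrow> bool" where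
  "smooth_convex_costs G \<longleftrightarrow>
     (\<forall>i<nPL G. \<forall>w.
        (\<exists>D :: (nat \<Rightarrow> real) \<Rightarrow> nat \<Rightarrow> real.
           (\<forall>u. \<forall>e<nDM G. ((\<lambda>a. cc G i w (u(e := a))) has_real_derivative D u e) (at (u e))) \<and>
           (\<forall>e<nDM G. continuous_on UNIV (\<lambda>u. D u e))) \<and>
        (\<forall>u v t. 0 \<le> t \<and> t \<le> 1 \<longrightarrow>
           cc G i w (\<lambda>e. t * u e + (1 - t) * v e) \<le> t * cc G i w u + (1 - t) * cc G i w v))"

definition affine_fun :: "((nat \<Rightarrow> real) \<Rightarrow> real) \<Rightarrow> bool" where
  "affine_fun f \<longleftrightarrow> (\<forall>u v t. f (\<lambda>e. t * u e + (1 - t) * v e) = t * f u + (1 - t) * f v)"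

definition condition_C :: "game \<Rightarrow> policy \<Rightarrow> bool" where
  "condition_C G \<gamma> \<longleftrightarrow> (\<forall>d<nDM G. \<forall>\<zeta>. affine_fun (\<lambda>u. \<gamma> d (obsD_of G \<zeta> u d)))"

end

theory Submission
  imports Defs
begin

(* A two-stage example suffices for all nine claims. A leader (DM 0 of player 0) acts first; a
   follower (DM 1 of player 1, whose cost vanishes) sees h + u_0 with h = 0, so in the dynamic game
   it observes the leader's action, while in the static reduction it observes only h = 0.
   The follower policy "copy the observation" therefore reacts to deviations of the leader in
   (P^D), whereas its static counterpart, the zero policy, does not; on the equilibrium path both
   produce the play u = 0. With leader cost (u_0 - u_1 - 1)^2 no leader action helps against a
   copying follower, while u_0 = 1 beats u_0 = 0 against the zero policy; with leader cost
   (u_1 - 1)^2 the roles are reversed. The first cost is smooth and convex and the copying policy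
   is affine in the actions, which gives (iii). *)

lemma cost_return_pmf:
  assumes "dist G = return_pmf z"
  shows "cost G A \<gamma> i = cc G i (z 0) (A \<gamma> z)"
  using assms by (simp add: cost_def)

lemma condcost_return_pmf:
  assumes "dist G = return_pmf z"
  shows "condcost G A Obs \<gamma> d (Obs \<gamma> z d) a = cc G (pl G d) (z 0) (A (\<gamma>(d := (\<lambda>_. a))) z)"
proof -
  have "{\<zeta> \<in> set_pmf (dist G). Obs \<gamma> \<zeta> d = Obs \<gamma> z d} = {z}"
    using assms by auto
  then show ?thesis
    using assms by (simp add: condcost_def)
qed

lemma stationary_return_pmf_iff:
  assumes "dist G = return_pmf z"
  shows "stationary G A Obs \<gamma> \<longleftrightarrow> admissible \<gamma> \<and>
    (\<forall>d<nDM G. ((\<lambda>a. cc G (pl G d) (z 0) (A (\<gamma>(d := (\<lambda>_. a))) z)) has_real_derivative 0)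
                  (at (\<gamma> d (Obs \<gamma> z d))))"
  using assms by (simp add: stationary_def condcost_return_pmf)

lemma PL_NE_imp_DM_NE:
  assumes "well_formed G" and "PL_NE G A \<gamma>"
  shows "DM_NE G A \<gamma>"
  unfolding DM_NE_def
proof (intro conjI allI impI)
  show "admissible \<gamma>"
    using assms(2) by (simp add: PL_NE_def)
  fix d and \<beta> :: "(nat \<Rightarrow> real) \<Rightarrow> real"
  assume "d < nDM G" and "\<beta> \<in> borel_measurable borel"
  then have "pl G d < nPL G"
    using assms(1) unfolding well_formed_def by blast
  moreover have "admissible (\<gamma>(d := \<beta>))"
    using \<open>\<beta> \<in> borel_measurable borel\<close> \<open>admissible \<gamma>\<close> by (simp add: admissible_def)
  moreover have "\<forall>d'<nDM G. pl G d' \<noteq> pl G d \<longrightarrow> (\<gamma>(d := \<beta>)) d' = \<gamma> d'"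
    by simp
  ultimately show "cost G A \<gamma> (pl G d) \<le> cost G A (\<gamma>(d := \<beta>)) (pl G d)"
    using assms(2) unfolding PL_NE_def by blast
qed

lemma DM_NE_constant_deviation:
  assumes "DM_NE G A \<gamma>" and "d < nDM G"
  shows "cost G A \<gamma> (pl G d) \<le> cost G A (\<gamma>(d := (\<lambda>_. a))) (pl G d)"
  using assms by (simp add: DM_NE_def)

lemma invertible_all_imp_invertible_as: "invertible_all G \<Longrightarrow> invertible_as G"
  unfolding invertible_all_def invertible_as_def by (blast intro: inj_on_subset)

definition leader_follower :: "((nat \<Rightarrow> real) \<Rightarrow> real) \<Rightarrow> game" where
  "leader_follower f = \<lparr>nDM = 2, nPL = 2, pl = id, dn = (\<lambda>d. if d = 1 then {0} else {}),
     hh = (\<lambda>_ _. 0), gg = (\<lambda>d x u. if d = 1 then x + u 0 else x),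
     cc = (\<lambda>i _ u. if i = 0 then f u else 0), dist = return_pmf (\<lambda>_. 0)\<rparr>"

lemma leader_follower_simps [simp]:
  "nDM (leader_follower f) = 2" "nPL (leader_follower f) = 2" "pl (leader_follower f) = id"
  "dn (leader_follower f) d = (if d = 1 then {0} else {})" "hh (leader_follower f) d = (\<lambda>_. 0)"
  "gg (leader_follower f) d x u = (if d = 1 then x + u 0 else x)"
  "cc (leader_follower f) i w u = (if i = 0 then f u else 0)"
  "dist (leader_follower f) = return_pmf (\<lambda>_. 0)"
  by (simp_all add: leader_follower_def)

lemma oset_leader_follower:
  "oset (leader_follower f) d = (if d = 1 then {0, 1} else {d})"
proof -
  have "{(a, b). a \<in> dn (leader_follower f) b} = {(0, 1)}"
    by (auto split: if_splits)
  moreover have "trans {(0::nat, 1::nat)}"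
    by (auto simp: trans_def)
  ultimately have "{(a, b). a \<in> dn (leader_follower f) b}\<^sup>+ = {(0, 1)}"
    by simp
  then show ?thesis
    unfolding oset_def by auto
qed

lemma obsD_of_leader_follower:
  "obsD_of (leader_follower f) \<zeta> u d = (if d = 1 then (\<lambda>_. 0)(1 := u 0) else (\<lambda>_. 0))"
  by (auto simp: fun_eq_iff obsD_of_def oset_leader_follower yhatD_def)

lemma obsS_leader_follower:
  "obsS (leader_follower f) \<gamma> \<zeta> d = (\<lambda>_. 0)"
  by (simp add: obsS_def cong: if_cong)

lemma actD_leader_follower:
  "actD (leader_follower f) \<gamma> \<zeta> =
     (\<lambda>_. 0)(0 := \<gamma> 0 (\<lambda>_. 0), 1 := \<gamma> 1 ((\<lambda>_. 0)(1 := \<gamma> 0 (\<lambda>_. 0))))"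
  by (simp add: actD_def numeral_2_eq_2 obsD_of_leader_follower)

lemma actS_leader_follower:
  "actS (leader_follower f) \<gamma> \<zeta> = (\<lambda>_. 0)(0 := \<gamma> 0 (\<lambda>_. 0), 1 := \<gamma> 1 (\<lambda>_. 0))"
  by (auto simp: fun_eq_iff actS_def obsS_leader_follower)

definition copy_follower :: policy where
  "copy_follower d y = (if d = 1 then y 1 else 0)"

definition zero_policy :: policy where
  "zero_policy d y = 0"

lemma actD_copy_follower:
  assumes "\<gamma> 1 = copy_follower 1"
  shows "actD (leader_follower f) \<gamma> \<zeta> = (\<lambda>_. 0)(0 := \<gamma> 0 (\<lambda>_. 0), 1 := \<gamma> 0 (\<lambda>_. 0))"
  using assms by (simp add: actD_leader_follower copy_follower_def)

lemma actS_zero_follower: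
  assumes "\<gamma> 1 = zero_policy 1"
  shows "actS (leader_follower f) \<gamma> \<zeta> = (\<lambda>_. 0)(0 := \<gamma> 0 (\<lambda>_. 0))"
  using assms by (simp add: actS_leader_follower zero_policy_def fun_upd_idem)

lemma cost_leader_follower:
  "cost (leader_follower f) A \<gamma> i = (if i = 0 then f (A \<gamma> (\<lambda>_. 0)) else 0)"
  by (simp add: cost_return_pmf)

lemma powerless_leader_equilibrium:
  assumes "admissible \<gamma>"
    and powerless: "\<And>\<gamma>'. \<gamma>' 1 = \<gamma> 1 \<Longrightarrow> f (A \<gamma>' (\<lambda>_. 0)) = f (A \<gamma> (\<lambda>_. 0))"
  shows "PL_NE (leader_follower f) A \<gamma>" and "stationary (leader_follower f) A Obs \<gamma>"
proof -
  show "PL_NE (leader_follower f) A \<gamma>"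
    unfolding PL_NE_def
  proof (intro conjI allI impI)
    fix i \<gamma>'
    assume "admissible \<gamma>' \<and> (\<forall>d<nDM (leader_follower f). pl (leader_follower f) d \<noteq> i \<longrightarrow> \<gamma>' d = \<gamma> d)"
    then have "i = 0 \<Longrightarrow> \<gamma>' 1 = \<gamma> 1"
      by simp
    then show "cost (leader_follower f) A \<gamma> i \<le> cost (leader_follower f) A \<gamma>' i"
      using powerless[of \<gamma>'] by (simp add: cost_leader_follower)
  qed (fact assms(1))
  have "(\<lambda>a. cc (leader_follower f) d 0 (A (\<gamma>(d := (\<lambda>_. a))) (\<lambda>_. 0))) =
        (\<lambda>a. if d = 0 then f (A \<gamma> (\<lambda>_. 0)) else 0)" for d
    using powerless[of "\<gamma>(0 := _)"] by auto
  then have "((\<lambda>a. cc (leader_follower f) d 0 (A (\<gamma>(d := (\<lambda>_. a))) (\<lambda>_. 0))) has_real_derivative 0) (at x)"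
    for d x
    by simp
  then show "stationary (leader_follower f) A Obs \<gamma>"
    using assms(1) by (simp add: stationary_return_pmf_iff)
qed

lemma improvable_leader_not_equilibrium:
  assumes leader_idle: "\<gamma> 0 = (\<lambda>_. 0)"
    and response: "\<And>a. f (A (\<gamma>(0 := (\<lambda>_. a))) (\<lambda>_. 0)) = (a - 1)\<^sup>2"
  shows "\<not> DM_NE (leader_follower f) A \<gamma>" and "\<not> stationary (leader_follower f) A Obs \<gamma>"
proof -
  have "\<gamma>(0 := (\<lambda>_. 0)) = \<gamma>"
    using leader_idle by auto
  then have "f (A \<gamma> (\<lambda>_. 0)) = 1"
    using response[of 0] by simp
  moreover have "f (A (\<gamma>(0 := (\<lambda>_. 1))) (\<lambda>_. 0)) = 0"
    using response[of 1] by simp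
  ultimately show "\<not> DM_NE (leader_follower f) A \<gamma>"
    using DM_NE_constant_deviation[of "leader_follower f" A \<gamma> 0 1]
    by (auto simp: cost_leader_follower)
  have "(\<lambda>a. f (A (\<gamma>(0 := (\<lambda>_. a))) (\<lambda>_. 0))) = (\<lambda>a. (a - 1)\<^sup>2)"
    using response by simp
  moreover have "((\<lambda>a. (a - 1)\<^sup>2) has_real_derivative -2) (at (0::real))"
    by (auto intro!: derivative_eq_intros)
  ultimately have "\<not> ((\<lambda>a. f (A (\<gamma>(0 := (\<lambda>_. a))) (\<lambda>_. 0))) has_real_derivative 0) (at 0)"
    using DERIV_unique by force
  then show "\<not> stationary (leader_follower f) A Obs \<gamma>"
    using leader_idle by (auto simp: stationary_return_pmf_iff intro!: exI[of _ 0])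
qed

lemma admissible_copy_follower: "admissible copy_follower"
  by (auto simp: admissible_def copy_follower_def [abs_def]
      intro: borel_measurable_continuous_onI)

lemma admissible_zero_policy: "admissible zero_policy"
  by (simp add: admissible_def zero_policy_def [abs_def])

lemma related_copy_follower_zero_policy:
  "related (leader_follower f) copy_follower zero_policy"
  by (auto simp: related_def obsD_def obsD_of_leader_follower actD_copy_follower
      copy_follower_def zero_policy_def)

lemma condition_C_copy_follower: "condition_C (leader_follower f) copy_follower"
  by (auto simp: condition_C_def affine_fun_def obsD_of_leader_follower copy_follower_def)

lemma invertible_all_leader_follower: "invertible_all (leader_follower f)"
  by (auto simp: invertible_all_def inj_on_def)

lemma continuous_on_snd_coordinate:
  "continuous_on UNIV (\<lambda>p :: 'a::topological_space \<times> ('b \<Rightarrow> 'c::topological_space). snd p i)"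
  by (rule continuous_on_product_then_coordinatewise) (intro continuous_intros)

lemma well_formed_leader_follower:
  assumes "f \<in> borel_measurable borel"
  shows "well_formed (leader_follower f)"
  unfolding well_formed_def
proof (intro conjI allI impI)
  fix d :: nat
  show "(\<lambda>p. gg (leader_follower f) d (fst p) (snd p)) \<in> borel_measurable borel"
    by (cases "d = 1")
      (auto intro!: borel_measurable_continuous_onI continuous_intros continuous_on_snd_coordinate)
next
  fix i :: nat
  have "snd \<in> borel_measurable (borel :: (real \<times> (nat \<Rightarrow> real)) measure)"
    by (intro borel_measurable_continuous_onI continuous_intros)
  then have "(\<lambda>p :: real \<times> (nat \<Rightarrow> real). f (snd p)) \<in> borel_measurable borel"
    by (rule measurable_compose[OF _ assms])
  then show "(\<lambda>p. cc (leader_follower f) i (fst p) (snd p)) \<in> borel_measurable borel"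
    by simp
next
  fix d :: nat
  show "\<forall>e\<in>dn (leader_follower f) d.
          \<exists>x u a. gg (leader_follower f) d x u \<noteq> gg (leader_follower f) d x (u(e := a))"
    by (auto intro!: exI[of _ "\<lambda>_. 0"] exI[of _ 1])
qed (auto simp: less_2_cases_iff)

definition tracking_cost :: "(nat \<Rightarrow> real) \<Rightarrow> real" where
  "tracking_cost u = (u 0 - u 1 - 1)\<^sup>2"

definition target_cost :: "(nat \<Rightarrow> real) \<Rightarrow> real" where
  "target_cost u = (u 1 - 1)\<^sup>2"

lemma tracking_cost_measurable: "tracking_cost \<in> borel_measurable borel"
  unfolding tracking_cost_def [abs_def]
  by (intro borel_measurable_continuous_onI continuous_intros continuous_on_product_coordinates)

lemma target_cost_measurable: "target_cost \<in> borel_measurable borel"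
  unfolding target_cost_def [abs_def]
  by (intro borel_measurable_continuous_onI continuous_intros continuous_on_product_coordinates)

lemma equilibrium_D_tracking_cost:
  "PL_NE_D (leader_follower tracking_cost) copy_follower"
  "stationary_D (leader_follower tracking_cost) copy_follower"
  using admissible_copy_follower
  by (auto intro!: powerless_leader_equilibrium simp: actD_copy_follower tracking_cost_def)

lemma not_equilibrium_S_tracking_cost:
  "\<not> DM_NE_S (leader_follower tracking_cost) zero_policy"
  "\<not> stationary_S (leader_follower tracking_cost) zero_policy"
proof -
  have "zero_policy 0 = (\<lambda>_. 0)"
    by (simp add: zero_policy_def [abs_def])
  moreover have "tracking_cost (actS (leader_follower tracking_cost) (zero_policy(0 := (\<lambda>_. a))) (\<lambda>_. 0))
                 = (a - 1)\<^sup>2" for a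
    by (simp add: actS_zero_follower tracking_cost_def)
  ultimately show "\<not> DM_NE_S (leader_follower tracking_cost) zero_policy"
    and "\<not> stationary_S (leader_follower tracking_cost) zero_policy"
    by (rule improvable_leader_not_equilibrium)+
qed

lemma equilibrium_S_target_cost:
  "PL_NE_S (leader_follower target_cost) zero_policy"
  "stationary_S (leader_follower target_cost) zero_policy"
  using admissible_zero_policy
  by (auto intro!: powerless_leader_equilibrium simp: actS_zero_follower target_cost_def)

lemma not_equilibrium_D_target_cost:
  "\<not> DM_NE_D (leader_follower target_cost) copy_follower"
  "\<not> stationary_D (leader_follower target_cost) copy_follower"
proof -
  have "copy_follower 0 = (\<lambda>_. 0)"
    by (simp add: copy_follower_def [abs_def])
  moreover have "target_cost (actD (leader_follower target_cost) (copy_follower(0 := (\<lambda>_. a))) (\<lambda>_. 0))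
                 = (a - 1)\<^sup>2" for a
    by (simp add: actD_copy_follower target_cost_def)
  ultimately show "\<not> DM_NE_D (leader_follower target_cost) copy_follower"
    and "\<not> stationary_D (leader_follower target_cost) copy_follower"
    by (rule improvable_leader_not_equilibrium)+
qed

lemma smooth_convex_costs_tracking_cost: "smooth_convex_costs (leader_follower tracking_cost)"
  unfolding smooth_convex_costs_def
proof (intro allI impI conjI)
  fix i :: nat and w :: real
  define D :: "(nat \<Rightarrow> real) \<Rightarrow> nat \<Rightarrow> real" where
    "D u e = (if i = 0 \<and> e = 0 then 2 * (u 0 - u 1 - 1)
              else if i = 0 \<and> e = 1 then - 2 * (u 0 - u 1 - 1) else 0)" for u e
  have "((\<lambda>a. cc (leader_follower tracking_cost) i w (u(e := a))) has_real_derivative D u e) (at (u e))"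
    if "e < 2" for u e
    using that by (cases "i = 0")
      (auto simp: less_2_cases_iff D_def tracking_cost_def intro!: derivative_eq_intros)
  moreover have "continuous_on UNIV (\<lambda>u. D u e)" for e
    unfolding D_def by (cases "i = 0"; cases "e = 0"; cases "e = 1") (auto intro!: continuous_intros)
  ultimately show "\<exists>D. (\<forall>u. \<forall>e<nDM (leader_follower tracking_cost).
             ((\<lambda>a. cc (leader_follower tracking_cost) i w (u(e := a))) has_real_derivative D u e) (at (u e))) \<and>
           (\<forall>e<nDM (leader_follower tracking_cost). continuous_on UNIV (\<lambda>u. D u e))"
    by auto
next
  fix i :: nat and w t :: real and u v :: "nat \<Rightarrow> real"
  assume t: "0 \<le> t \<and> t \<le> 1"
  have "t * u 0 + (1 - t) * v 0 - (t * u 1 + (1 - t) * v 1) - 1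
          = (1 - t) * (v 0 - v 1 - 1) + t * (u 0 - u 1 - 1)"
    by (simp add: algebra_simps)
  then have "tracking_cost (\<lambda>e. t * u e + (1 - t) * v e) \<le> t * tracking_cost u + (1 - t) * tracking_cost v"
    using t convex_onD[OF convex_power2, of t "v 0 - v 1 - 1" "u 0 - u 1 - 1"]
    by (simp add: tracking_cost_def algebra_simps)
  then show "cc (leader_follower tracking_cost) i w (\<lambda>e. t * u e + (1 - t) * v e)
               \<le> t * cc (leader_follower tracking_cost) i w u + (1 - t) * cc (leader_follower tracking_cost) i w v"
    by simp
qed

theorem proposition3p1:
  shows
  \<comment> \<open>(i) D-equilibrium does not transfer to the static reduction\<close>
  "(\<exists>G \<gamma>D \<gamma>S. well_formed G \<and> invertible_as G \<and> PL_NE_D G \<gamma>D \<and> admissible \<gamma>S \<and>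
       related G \<gamma>D \<gamma>S \<and> \<not> PL_NE_S G \<gamma>S) \<and>
   (\<exists>G \<gamma>D \<gamma>S. well_formed G \<and> invertible_as G \<and> DM_NE_D G \<gamma>D \<and> admissible \<gamma>S \<and>
       related G \<gamma>D \<gamma>S \<and> \<not> DM_NE_S G \<gamma>S) \<and>
   (\<exists>G \<gamma>D \<gamma>S. well_formed G \<and> invertible_as G \<and> stationary_D G \<gamma>D \<and> admissible \<gamma>S \<and>
       related G \<gamma>D \<gamma>S \<and> \<not> stationary_S G \<gamma>S) \<and>
   \<comment> \<open>(ii) S-equilibrium does not transfer back\<close>
   (\<exists>G \<gamma>S \<gamma>D. well_formed G \<and> invertible_as G \<and> PL_NE_S G \<gamma>S \<and> admissible \<gamma>D \<and>
       related G \<gamma>D \<gamma>S \<and> \<not> PL_NE_D G \<gamma>D) \<and>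
   (\<exists>G \<gamma>S \<gamma>D. well_formed G \<and> invertible_as G \<and> DM_NE_S G \<gamma>S \<and> admissible \<gamma>D \<and>
       related G \<gamma>D \<gamma>S \<and> \<not> DM_NE_D G \<gamma>D) \<and>
   (\<exists>G \<gamma>S \<gamma>D. well_formed G \<and> invertible_as G \<and> stationary_S G \<gamma>S \<and> admissible \<gamma>D \<and>
       related G \<gamma>D \<gamma>S \<and> \<not> stationary_D G \<gamma>D) \<and>
   \<comment> \<open>(iii) (i) persists under invertibility, smooth convex costs and Condition (C)\<close>
   (\<exists>G \<gamma>D \<gamma>S. well_formed G \<and> invertible_all G \<and> smooth_convex_costs G \<and> condition_C G \<gamma>D \<and>
       PL_NE_D G \<gamma>D \<and> admissible \<gamma>S \<and> related G \<gamma>D \<gamma>S \<and> \<not> PL_NE_S G \<gamma>S) \<and>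
   (\<exists>G \<gamma>D \<gamma>S. well_formed G \<and> invertible_all G \<and> smooth_convex_costs G \<and> condition_C G \<gamma>D \<and>
       DM_NE_D G \<gamma>D \<and> admissible \<gamma>S \<and> related G \<gamma>D \<gamma>S \<and> \<not> DM_NE_S G \<gamma>S) \<and>
   (\<exists>G \<gamma>D \<gamma>S. well_formed G \<and> invertible_all G \<and> smooth_convex_costs G \<and> condition_C G \<gamma>D \<and>
       stationary_D G \<gamma>D \<and> admissible \<gamma>S \<and> related G \<gamma>D \<gamma>S \<and> \<not> stationary_S G \<gamma>S)"
proof -
  let ?T = "leader_follower tracking_cost" and ?A = "leader_follower target_cost"
  have wf: "well_formed ?T" "well_formed ?A"
    by (simp_all add: well_formed_leader_follower tracking_cost_measurable target_cost_measurable)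
  have inv: "invertible_all ?T" "invertible_as ?T" "invertible_as ?A"
    by (simp_all add: invertible_all_leader_follower invertible_all_imp_invertible_as)
  have D_tracking: "PL_NE_D ?T copy_follower" "DM_NE_D ?T copy_follower" "stationary_D ?T copy_follower"
    using equilibrium_D_tracking_cost PL_NE_imp_DM_NE[OF wf(1)] by blast+
  have S_tracking: "\<not> PL_NE_S ?T zero_policy" "\<not> DM_NE_S ?T zero_policy" "\<not> stationary_S ?T zero_policy"
    using not_equilibrium_S_tracking_cost PL_NE_imp_DM_NE[OF wf(1)] by blast+
  have S_target: "PL_NE_S ?A zero_policy" "DM_NE_S ?A zero_policy" "stationary_S ?A zero_policy"
    using equilibrium_S_target_cost PL_NE_imp_DM_NE[OF wf(2)] by blast+
  have D_target: "\<not> PL_NE_D ?A copy_follower" "\<not> DM_NE_D ?A copy_follower" "\<not> stationary_D ?A copy_follower"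
    using not_equilibrium_D_target_cost PL_NE_imp_DM_NE[OF wf(2)] by blast+
  show ?thesis
    using wf inv D_tracking S_tracking S_target D_target smooth_convex_costs_tracking_cost
      condition_C_copy_follower related_copy_follower_zero_policy
      admissible_copy_follower admissible_zero_policy
    by blast
qed

end
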